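(* Let $G$ be a connected cograph which is $k$-connected, and let $S$ be a minimal vertex separator of $G$ with $|S|=k$. Then every vertex $v\in V(G)\setminus S$ is adjacent to every vertex of $S$.
   Context: A cograph is a graph that can be built from single vertices by repeatedly taking disjoint unions and joins; equivalently, a graph with no induced path on four vertices. A vertex separator of a connected graph $G$ is a set $S\subset V(G)$ such that the subgraph induced on $V(G)\setminus S$ is disconnected; it is minimal if no proper subset of $S$ is a vertex separator; a minimum vertex separator is a minimal vertex separator of least size. The paper calls $G$ $k$-connected if there exists a minimum vertex separator of size $k$. *)

theory Defs
  imports Main
begin

definition simple_graph :: "'a set \<Rightarrow> ('a \<Rightarrow> 'a \<Rightarrow> bool) \<Rightarrow> bool" where
  "simple_graph V E \<longleftrightarrow> finite V \<and> (\<forall>x y. E x y \<longrightarrow> E y x) \<and> (\<forall>x. \<not> E x x)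
     \<and> (\<forall>x y. E x y \<longrightarrow> x \<in> V \<and> y \<in> V)"

definition reach_in :: "('a \<Rightarrow> 'a \<Rightarrow> bool) \<Rightarrow> 'a set \<Rightarrow> 'a \<Rightarrow> 'a \<Rightarrow> bool" where
  "reach_in E X = (\<lambda>x y. x \<in> X \<and> y \<in> X \<and> E x y)\<^sup>*\<^sup>*"

definition connected_on :: "('a \<Rightarrow> 'a \<Rightarrow> bool) \<Rightarrow> 'a set \<Rightarrow> bool" where
  "connected_on E X \<longleftrightarrow> X \<noteq> {} \<and> (\<forall>u\<in>X. \<forall>v\<in>X. reach_in E X u v)"

definition disconnected_on :: "('a \<Rightarrow> 'a \<Rightarrow> bool) \<Rightarrow> 'a set \<Rightarrow> bool" where
  "disconnected_on E X \<longleftrightarrow> (\<exists>u\<in>X. \<exists>v\<in>X. \<not> reach_in E X u v)"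

definition cograph :: "'a set \<Rightarrow> ('a \<Rightarrow> 'a \<Rightarrow> bool) \<Rightarrow> bool" where
  "cograph V E \<longleftrightarrow> simple_graph V E \<and>
     \<not> (\<exists>a\<in>V. \<exists>b\<in>V. \<exists>c\<in>V. \<exists>d\<in>V. distinct [a,b,c,d] \<and>
          E a b \<and> E b c \<and> E c d \<and> \<not> E a c \<and> \<not> E b d \<and> \<not> E a d)"

definition vertex_separator :: "'a set \<Rightarrow> ('a \<Rightarrow> 'a \<Rightarrow> bool) \<Rightarrow> 'a set \<Rightarrow> bool" where
  "vertex_separator V E S \<longleftrightarrow> S \<subset> V \<and> disconnected_on E (V - S)"

definition minimal_vertex_separator :: "'a set \<Rightarrow> ('a \<Rightarrow> 'a \<Rightarrow> bool) \<Rightarrow> 'a set \<Rightarrow> bool" where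
  "minimal_vertex_separator V E S \<longleftrightarrow> vertex_separator V E S \<and>
     (\<forall>T. T \<subset> S \<longrightarrow> \<not> vertex_separator V E T)"

definition minimum_vertex_separator :: "'a set \<Rightarrow> ('a \<Rightarrow> 'a \<Rightarrow> bool) \<Rightarrow> 'a set \<Rightarrow> bool" where
  "minimum_vertex_separator V E S \<longleftrightarrow> minimal_vertex_separator V E S \<and>
     (\<forall>T. minimal_vertex_separator V E T \<longrightarrow> card S \<le> card T)"

(* the paper's notion: G is k-connected iff some minimum vertex separator has size k *)
definition k_connected :: "'a set \<Rightarrow> ('a \<Rightarrow> 'a \<Rightarrow> bool) \<Rightarrow> nat \<Rightarrow> bool" where
  "k_connected V E k \<longleftrightarrow> (\<exists>S. minimum_vertex_separator V E S \<and> card S = k)"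

end

theory Submission
  imports Defs
begin

(* Removing a vertex s from a minimal separator S reconnects V - S, so s has a neighbour in
   every component of V - S.  If s were not adjacent to some v in V - S, then walking inside the
   component of v from a neighbour of s to v crosses an edge x1 x2 with s ~ x1 and s not ~ x2;
   together with a neighbour d of s in another component, d - s - x1 - x2 is an induced P4. *)

lemma rtranclp_boundary_edge:
  assumes "R\<^sup>*\<^sup>* u v" "P u" "\<not> P v"
  shows "\<exists>x y. R\<^sup>*\<^sup>* u x \<and> R x y \<and> P x \<and> \<not> P y"
  using assms by (induction rule: rtranclp_induct) blast+

lemma reach_in_refl: "reach_in E X u u"
  unfolding reach_in_def by simp

lemma reach_in_trans: "reach_in E X u v \<Longrightarrow> reach_in E X v w \<Longrightarrow> reach_in E X u w"
  unfolding reach_in_def by (rule rtranclp_trans)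

lemma reach_in_edge: "u \<in> X \<Longrightarrow> v \<in> X \<Longrightarrow> E u v \<Longrightarrow> reach_in E X u v"
  unfolding reach_in_def by auto

lemma reach_in_sym:
  assumes "\<forall>x y. E x y \<longrightarrow> E y x" "reach_in E X u v"
  shows "reach_in E X v u"
  using assms(2) unfolding reach_in_def
  by (induction rule: rtranclp_induct)
     (auto intro: converse_rtranclp_into_rtranclp simp: assms(1))

lemma reach_in_closed: "reach_in E X u v \<Longrightarrow> u \<in> X \<Longrightarrow> v \<in> X"
  unfolding reach_in_def by (induction rule: rtranclp_induct) auto

lemma disconnected_on_other_component:
  assumes "\<forall>x y. E x y \<longrightarrow> E y x" "disconnected_on E X" "v \<in> X"
  shows "\<exists>w\<in>X. \<not> reach_in E X v w"
proof -
  obtain a b where ab: "a \<in> X" "b \<in> X" "\<not> reach_in E X a b"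
    using assms(2) unfolding disconnected_on_def by blast
  show ?thesis
  proof (cases "reach_in E X v a")
    case True
    then have "\<not> reach_in E X v b"
      using ab(3) reach_in_trans[OF reach_in_sym[OF assms(1) True]] by blast
    with ab(2) show ?thesis by blast
  qed (use ab(1) in blast)
qed

lemma reach_in_boundary_edge:
  assumes "reach_in E X u v" "P u" "\<not> P v"
  shows "\<exists>x y. reach_in E X u x \<and> x \<in> X \<and> y \<in> X \<and> E x y \<and> P x \<and> \<not> P y"
  using rtranclp_boundary_edge[OF assms[unfolded reach_in_def]] unfolding reach_in_def by blast

lemma reach_in_neighbour_of_outside_vertex:
  assumes "s \<notin> X" "w \<in> X" "reach_in E (insert s X) w s"
  shows "\<exists>d. reach_in E X w d \<and> E d s"
proof -
  have "\<not> reach_in E X w s"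
    using reach_in_closed[OF _ assms(2)] assms(1) by blast
  then obtain x y where xy: "reach_in E X w x" "x \<in> insert s X" "y \<in> insert s X" "E x y"
      and not_wy: "\<not> reach_in E X w y"
    using reach_in_boundary_edge[OF assms(3), of "reach_in E X w", OF reach_in_refl] by blast
  have "x \<in> X"
    using reach_in_closed[OF xy(1) assms(2)] .
  have "y = s"
  proof (rule ccontr)
    assume "y \<noteq> s"
    then have "reach_in E X x y"
      using \<open>x \<in> X\<close> xy(3,4) by (simp add: reach_in_edge)
    then show False
      using reach_in_trans[OF xy(1)] not_wy by blast
  qed
  with xy show ?thesis by blast
qed

lemma minimal_vertex_separator_reconnect:
  assumes "minimal_vertex_separator V E S" "s \<in> S" "a \<in> insert s (V - S)" "b \<in> insert s (V - S)"
  shows "reach_in E (insert s (V - S)) a b"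
proof -
  have "S \<subset> V"
    using assms(1) by (simp add: minimal_vertex_separator_def vertex_separator_def)
  have "S - {s} \<subset> S"
    using assms(2) by blast
  then have "\<not> vertex_separator V E (S - {s})"
    using assms(1) unfolding minimal_vertex_separator_def by blast
  moreover have "S - {s} \<subset> V"
    using \<open>S \<subset> V\<close> by blast
  moreover have "V - (S - {s}) = insert s (V - S)"
    using \<open>S \<subset> V\<close> assms(2) by blast
  ultimately have "\<not> disconnected_on E (insert s (V - S))"
    unfolding vertex_separator_def by simp
  then show ?thesis
    using assms(3,4) unfolding disconnected_on_def by blast
qed

lemma minimal_vertex_separator_neighbour_in_component:
  assumes "minimal_vertex_separator V E S" "s \<in> S" "w \<in> V - S"
  shows "\<exists>d. reach_in E (V - S) w d \<and> E d s"
proof (rule reach_in_neighbour_of_outside_vertex)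
  show "s \<notin> V - S" using assms(2) by simp
  show "w \<in> V - S" using assms(3) .
  show "reach_in E (insert s (V - S)) w s"
    using minimal_vertex_separator_reconnect[OF assms(1,2)] assms(3) by simp
qed

lemma cograph_no_induced_P4:
  assumes "cograph V E" "a \<in> V" "b \<in> V" "c \<in> V" "d \<in> V" "distinct [a, b, c, d]"
    "E a b" "E b c" "E c d" "\<not> E a c" "\<not> E b d" "\<not> E a d"
  shows False
proof -
  have "\<exists>a\<in>V. \<exists>b\<in>V. \<exists>c\<in>V. \<exists>d\<in>V. distinct [a, b, c, d] \<and>
          E a b \<and> E b c \<and> E c d \<and> \<not> E a c \<and> \<not> E b d \<and> \<not> E a d"
    using assms(2-12) by blast
  with assms(1) show False
    unfolding cograph_def by blast
qed

lemma cograph_minimal_vertex_separator_complete: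
  assumes cog: "cograph V E" and sep: "minimal_vertex_separator V E S"
    and v: "v \<in> V - S" and s: "s \<in> S"
  shows "E v s"
proof (rule ccontr)
  assume "\<not> E v s"
  let ?X = "V - S"
  have E_sym: "\<forall>x y. E x y \<longrightarrow> E y x" and irr: "\<forall>x. \<not> E x x"
    and inV: "\<forall>x y. E x y \<longrightarrow> x \<in> V \<and> y \<in> V"
    using cog by (auto simp: cograph_def simple_graph_def)
  have comp_edge: "reach_in E ?X v y" if "reach_in E ?X v x" "x \<in> ?X" "y \<in> ?X" "E x y" for x y
    using reach_in_trans[OF that(1) reach_in_edge[of x ?X y E, OF that(2-4)]] .
  obtain w where w: "w \<in> ?X" "\<not> reach_in E ?X v w"
    using disconnected_on_other_component[OF E_sym _ v] sep
    by (auto simp: minimal_vertex_separator_def vertex_separator_def)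
  obtain d where d: "reach_in E ?X w d" "E d s"
    using minimal_vertex_separator_neighbour_in_component[OF sep s w(1)] by blast
  have dX: "d \<in> ?X"
    using reach_in_closed[OF d(1) w(1)] .
  have not_vd: "\<not> reach_in E ?X v d"
    using w(2) reach_in_trans[of E ?X v d w] reach_in_sym[OF E_sym d(1)] by blast
  obtain d' where d': "reach_in E ?X v d'" "E d' s"
    using minimal_vertex_separator_neighbour_in_component[OF sep s v] by blast
  have "reach_in E ?X d' v" "E s d'" "\<not> E s v"
    using reach_in_sym[OF E_sym d'(1)] d'(2) \<open>\<not> E v s\<close> E_sym by blast+
  then obtain x1 x2 where x: "reach_in E ?X d' x1" "x1 \<in> ?X" "x2 \<in> ?X" "E x1 x2"
      "E s x1" "\<not> E s x2"
    using reach_in_boundary_edge[of E ?X d' v "E s"] by blast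
  have v_x1: "reach_in E ?X v x1"
    using reach_in_trans[OF d'(1) x(1)] .
  have v_x2: "reach_in E ?X v x2"
    using comp_edge[OF v_x1 x(2,3,4)] .
  have "\<not> E d x1" "\<not> E d x2"
    using comp_edge[OF v_x1 x(2) dX] comp_edge[OF v_x2 x(3) dX] not_vd E_sym by blast+
  moreover have "distinct [d, s, x1, x2]"
    using v_x1 v_x2 not_vd dX x(2,3,4) s irr by auto
  moreover have "d \<in> V" "s \<in> V" "x1 \<in> V" "x2 \<in> V"
    using dX x(2,3) d(2) inV by auto
  ultimately show False
    using cograph_no_induced_P4[OF cog] d(2) x(4-6) by blast
qed

theorem corollary2:
  fixes V :: "'a set" and E :: "'a \<Rightarrow> 'a \<Rightarrow> bool" and S :: "'a set" and k :: nat
  assumes "cograph V E"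
    and "connected_on E V"
    and "k_connected V E k"
    and "minimal_vertex_separator V E S"
    and "card S = k"
  shows "\<forall>v \<in> V - S. \<forall>s \<in> S. E v s"
  using cograph_minimal_vertex_separator_complete[OF assms(1,4)] by blast

end
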